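(* There is a constant $a_0>0$, depending only on $d$, $\Lambda$ and $\gamma$, such that for every domain $\Omega\subset\mathbb{R}^d$, every $u\in\mathcal{S}^F(\Omega)$, every $x_0\in\mathbb{R}^d$ and every $a\ge a_0$, $$L_u\big(au-|x-x_0|^\beta\big)\ge 0\qquad\text{in }\{u>0\}\cap\Omega,$$ where $\beta=\frac{2}{2-\gamma}$.
   Context: Fix $d\ge1$, $\Lambda\ge1$, $\gamma\in(1,2)$. $\mathcal{S}_d$ is the space of real symmetric $d\times d$ matrices. Standing assumptions on $F:\mathcal{S}_d\to\mathbb{R}$: (i) uniform ellipticity: $\frac1\Lambda\|P\|\le F(M+P)-F(M)\le\Lambda\|P\|$ for all $M,P\in\mathcal{S}_d$, $P\ge0$; (ii) $F$ is convex, $F(0)=0$, and the trace map is a sub-differential of $F$ at $0$; (iii) either $F$ is (Gâteaux) differentiable at $0$, or $F(\lambda M)=\lambda F(M)$ for all $\lambda>0$, $M\in\mathcal{S}_d$. A sub-differential of $F$ at $A$ is a linear map $S_A:\mathcal{S}_d\to\mathbb{R}$ with $S_A(M)\le F(A+M)-F(A)$ for all $M$. $\mathcal{S}^F(\Omega)$ is the class of continuous (viscosity, hence classical) solutions of $F(D^2u)=u^{\gamma-1}$, $u\ge0$ in $\Omega$. The linearized operator is $L_u(w)=S_{D^2u}(D^2w)-(\gamma-1)u^{\gamma-2}w$ in $\{u>0\}\cap\Omega$, where at each point $x$, $S_{D^2u}$ is a sub-differential of $F$ at $D^2u(x)$. *)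

theory Defs
  imports "HOL-Analysis.Analysis"
begin

text \<open>Real symmetric d x d matrices, d = CARD('n).\<close>
definition sym_mat :: "real^'n^'n \<Rightarrow> bool" where
  "sym_mat M \<longleftrightarrow> transpose M = M"

definition psd_mat :: "real^'n^'n \<Rightarrow> bool" where
  "psd_mat P \<longleftrightarrow> (\<forall>x. 0 \<le> x \<bullet> (P *v x))"

definition mat_norm :: "real^'n^'n \<Rightarrow> real" where
  "mat_norm P = onorm (\<lambda>x. P *v x)"

definition subdiff :: "(real^'n^'n \<Rightarrow> real) \<Rightarrow> real^'n^'n \<Rightarrow> (real^'n^'n \<Rightarrow> real) \<Rightarrow> bool" where
  "subdiff F A S \<longleftrightarrow> linear S \<and> (\<forall>M. sym_mat M \<longrightarrow> S M \<le> F (A + M) - F A)"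

definition unif_elliptic :: "real \<Rightarrow> (real^'n^'n \<Rightarrow> real) \<Rightarrow> bool" where
  "unif_elliptic \<Lambda> F \<longleftrightarrow> (\<forall>M P. sym_mat M \<and> sym_mat P \<and> psd_mat P \<longrightarrow>
      mat_norm P / \<Lambda> \<le> F (M + P) - F M \<and> F (M + P) - F M \<le> \<Lambda> * mat_norm P)"

definition gateaux_diff_at0 :: "(real^'n^'n \<Rightarrow> real) \<Rightarrow> bool" where
  "gateaux_diff_at0 F \<longleftrightarrow> (\<exists>L. linear L \<and> (\<forall>M. sym_mat M \<longrightarrow>
      ((\<lambda>t. (F (t *\<^sub>R M) - F 0) / t) \<longlongrightarrow> L M) (at 0)))"

definition pos_homog :: "(real^'n^'n \<Rightarrow> real) \<Rightarrow> bool" where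
  "pos_homog F \<longleftrightarrow> (\<forall>c>0. \<forall>M. sym_mat M \<longrightarrow> F (c *\<^sub>R M) = c * F M)"

definition admissible_F :: "real \<Rightarrow> (real^'n^'n \<Rightarrow> real) \<Rightarrow> bool" where
  "admissible_F \<Lambda> F \<longleftrightarrow> unif_elliptic \<Lambda> F
     \<and> convex_on {M. sym_mat M} F \<and> F 0 = 0 \<and> subdiff F 0 trace
     \<and> (gateaux_diff_at0 F \<or> pos_homog F)"

definition hessian_at :: "(real^'n \<Rightarrow> real) \<Rightarrow> real^'n^'n \<Rightarrow> real^'n \<Rightarrow> bool" where
  "hessian_at f H x \<longleftrightarrow> (\<exists>e>0. \<exists>Df.
      (\<forall>y\<in>ball x e. (f has_derivative (\<lambda>h. Df y \<bullet> h)) (at y))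
      \<and> (Df has_derivative (\<lambda>h. H *v h)) (at x))"

text \<open>Class S^F(Omega): classical nonnegative solutions of F(D^2 u) = u^(gamma-1).\<close>
definition sol_class :: "(real^'n^'n \<Rightarrow> real) \<Rightarrow> real \<Rightarrow> (real^'n) set \<Rightarrow> (real^'n \<Rightarrow> real) \<Rightarrow> bool" where
  "sol_class F \<gamma> \<Omega> u \<longleftrightarrow> continuous_on \<Omega> u \<and>
     (\<forall>x\<in>\<Omega>. 0 \<le> u x \<and> (\<exists>H. hessian_at u H x \<and> F H = u x powr (\<gamma> - 1)))"

text \<open>L_u(w) \<ge> 0 in {u>0} \<inter> Omega, for every choice of sub-differential S of F at D^2u(x).\<close>
definition lin_op_nonneg :: "(real^'n^'n \<Rightarrow> real) \<Rightarrow> real \<Rightarrow> (real^'n) set \<Rightarrow>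
    (real^'n \<Rightarrow> real) \<Rightarrow> (real^'n \<Rightarrow> real) \<Rightarrow> bool" where
  "lin_op_nonneg F \<gamma> \<Omega> u w \<longleftrightarrow> (\<forall>x\<in>\<Omega>. 0 < u x \<longrightarrow>
     (\<forall>Hu Hw S. hessian_at u Hu x \<and> hessian_at w Hw x \<and> subdiff F Hu S \<longrightarrow>
        0 \<le> S Hw - (\<gamma> - 1) * u x powr (\<gamma> - 2) * w x))"

end

theory Submission
  imports Defs
begin

text \<open>Write \<open>w = a u - |x - x0|^\<beta>\<close>. At a point where \<open>u > 0\<close> the Hessian of \<open>w\<close> is
  \<open>a D\<^sup>2u - P\<close>, where \<open>P\<close>, the Hessian of \<open>|x - x0|^\<beta>\<close>, is symmetric, positive semidefinite
  and of norm at most \<open>\<beta>(\<beta> - 1)|x - x0|^(\<beta> - 2)\<close>. For a subdifferential \<open>S\<close> of \<open>F\<close> at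
  \<open>D\<^sup>2u\<close>, convexity and \<open>F(0) = 0\<close> give \<open>S(D\<^sup>2u) \<ge> F(D\<^sup>2u) = u^(\<gamma> - 1)\<close>, and ellipticity gives
  \<open>S(P) \<le> \<Lambda>|P|\<close>. As \<open>\<beta> - 2 = \<beta>(\<gamma> - 1)\<close>, with \<open>R = |x - x0|^\<beta>\<close> and \<open>K = \<Lambda>\<beta>(\<beta> - 1)\<close> this leaves
  \<open>L\<^sub>u(w) \<ge> (2 - \<gamma>) a u^(\<gamma> - 1) + (\<gamma> - 1) u^(\<gamma> - 2) R - K R^(\<gamma> - 1)\<close>, which is nonnegative for
  \<open>a \<ge> K^(1/(2 - \<gamma>))\<close> by the weighted AM-GM inequality. Testing the subdifferential on
  \<open>-D\<^sup>2u\<close> requires \<open>D\<^sup>2u\<close> to be symmetric, which follows from the symmetry of second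
  difference quotients.\<close>

lemma gradient_unique:
  fixes A B :: "real^'n"
  assumes "(f has_derivative (\<lambda>h. A \<bullet> h)) (at y)" and "(f has_derivative (\<lambda>h. B \<bullet> h)) (at y)"
  shows "A = B"
  using has_derivative_unique[OF assms] vector_eq_rdot by metis

lemma hessian_at_unique:
  assumes "hessian_at f H1 x" and "hessian_at f H2 x"
  shows "H1 = H2"
proof -
  obtain e1 D1 where e1: "e1 > 0" "\<forall>y\<in>ball x e1. (f has_derivative (\<lambda>h. D1 y \<bullet> h)) (at y)"
    "(D1 has_derivative (\<lambda>h. H1 *v h)) (at x)" using assms(1) unfolding hessian_at_def by blast
  obtain e2 D2 where e2: "e2 > 0" "\<forall>y\<in>ball x e2. (f has_derivative (\<lambda>h. D2 y \<bullet> h)) (at y)"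
    "(D2 has_derivative (\<lambda>h. H2 *v h)) (at x)" using assms(2) unfolding hessian_at_def by blast
  have "D1 y = D2 y" if "y \<in> ball x (min e1 e2)" for y
    using that e1(2) e2(2) gradient_unique by fastforce
  then have "(D2 has_derivative (\<lambda>h. H1 *v h)) (at x)"
    using e1 e2 by (intro has_derivative_transform_within_open[OF e1(3), of "ball x (min e1 e2)"]) auto
  from has_derivative_unique[OF this e2(3)] show ?thesis
    by (metis matrix_eq)
qed

lemma hessian_at_scale_diff:
  assumes "hessian_at f H x" and "hessian_at g G x"
  shows "hessian_at (\<lambda>y. a * f y - g y) (a *\<^sub>R H - G) x"
proof -
  obtain e1 D1 where e1: "e1 > 0" "\<forall>y\<in>ball x e1. (f has_derivative (\<lambda>h. D1 y \<bullet> h)) (at y)"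
    "(D1 has_derivative (\<lambda>h. H *v h)) (at x)" using assms(1) unfolding hessian_at_def by blast
  obtain e2 D2 where e2: "e2 > 0" "\<forall>y\<in>ball x e2. (g has_derivative (\<lambda>h. D2 y \<bullet> h)) (at y)"
    "(D2 has_derivative (\<lambda>h. G *v h)) (at x)" using assms(2) unfolding hessian_at_def by blast
  have "((\<lambda>y. a * f y - g y) has_derivative (\<lambda>h. (a *\<^sub>R D1 y - D2 y) \<bullet> h)) (at y)"
    if "y \<in> ball x (min e1 e2)" for y
    using that e1(2) e2(2)
    by (auto intro!: derivative_eq_intros simp: inner_diff_left)
  moreover have "((\<lambda>y. a *\<^sub>R D1 y - D2 y) has_derivative (\<lambda>h. (a *\<^sub>R H - G) *v h)) (at x)"
    using e1(3) e2(3)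
    by (auto intro!: derivative_eq_intros
        simp: scaleR_matrix_vector_assoc matrix_vector_mult_diff_rdistrib)
  ultimately show ?thesis
    unfolding hessian_at_def using e1(1) e2(1)
    by (auto intro!: exI[of _ "min e1 e2"] exI[of _ "\<lambda>y. a *\<^sub>R D1 y - D2 y"])
qed

text \<open>Mean value inequality on \<open>[x, x + h]\<close> for \<open>g y = f (y + k) - f y - (H k) \<bullet> y\<close>: the
  gradient of \<open>g\<close> is the difference of two first-order Taylor errors of \<open>Df\<close> at \<open>x\<close>.\<close>
lemma second_difference_bound:
  fixes f :: "real^'n \<Rightarrow> real"
  assumes grad: "\<And>y. norm (y - x) < d \<Longrightarrow> (f has_derivative (\<lambda>v. Df y \<bullet> v)) (at y)"
    and lin: "\<And>y. norm (y - x) < d \<Longrightarrow> norm (Df y - Df x - H *v (y - x)) \<le> \<epsilon> * norm (y - x)"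
    and "0 \<le> \<epsilon>" and small: "norm h + norm k < d"
  shows "\<bar>f (x + h + k) - f (x + h) - f (x + k) + f x - (H *v k) \<bullet> h\<bar> \<le> 2 * \<epsilon> * (norm h + norm k)\<^sup>2"
proof -
  let ?g = "\<lambda>y. f (y + k) - f y - (H *v k) \<bullet> y"
  let ?S = "closed_segment x (x + h)"
  have near: "norm (y - x) \<le> norm h" "norm (y + k - x) \<le> norm h + norm k" if "y \<in> ?S" for y
  proof -
    from that obtain t where "0 \<le> t" "t \<le> 1" "y - x = t *\<^sub>R h"
      by (auto simp: closed_segment_def algebra_simps)
    then show "norm (y - x) \<le> norm h"
      by (simp add: mult_left_le_one_le)
    then show "norm (y + k - x) \<le> norm h + norm k"
      using norm_triangle_ineq[of "y - x" k] by (simp add: algebra_simps)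
  qed
  have inside: "norm (y - x) < d" "norm (y + k - x) < d" if "y \<in> ?S" for y
    using near[OF that] small norm_ge_zero[of k] by linarith+
  have "(?g has_derivative (\<lambda>v. (Df (y + k) - Df y - H *v k) \<bullet> v)) (at y within ?S)"
    if "y \<in> ?S" for y
  proof -
    have "((\<lambda>y. y + k) has_derivative (\<lambda>v. v)) (at y)"
      by (auto intro!: derivative_eq_intros)
    then have "((\<lambda>y. f (y + k)) has_derivative (\<lambda>v. Df (y + k) \<bullet> v)) (at y)"
      using grad inside[OF that] diff_chain_at[of "\<lambda>y. y + k" "\<lambda>v. v" y f] by (simp add: o_def)
    then have "(?g has_derivative (\<lambda>v. Df (y + k) \<bullet> v - Df y \<bullet> v - (H *v k) \<bullet> v)) (at y)"
      using grad inside[OF that]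
      by (intro has_derivative_diff has_derivative_inner_right has_derivative_ident) auto
    then show ?thesis
      by (simp add: has_derivative_at_withinI inner_diff_left)
  qed
  moreover have "onorm (\<lambda>v. (Df (y + k) - Df y - H *v k) \<bullet> v) \<le> 2 * \<epsilon> * (norm h + norm k)"
    if "y \<in> ?S" for y
  proof -
    have "Df (y + k) - Df y - H *v k
        = (Df (y + k) - Df x - H *v (y + k - x)) - (Df y - Df x - H *v (y - x))"
      by (simp add: algebra_simps)
    then have "norm (Df (y + k) - Df y - H *v k)
        \<le> norm (Df (y + k) - Df x - H *v (y + k - x)) + norm (Df y - Df x - H *v (y - x))"
      by (metis norm_triangle_ineq4)
    also have "\<dots> \<le> \<epsilon> * (norm h + norm k) + \<epsilon> * (norm h + norm k)"
      using lin inside[OF that] near[OF that] \<open>0 \<le> \<epsilon>\<close>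
      by (intro add_mono order_trans[OF lin] mult_left_mono) (auto intro: add_increasing2)
    finally have "norm (Df (y + k) - Df y - H *v k) \<le> 2 * \<epsilon> * (norm h + norm k)"
      by simp
    then show ?thesis
      using onorm_inner_right[OF bounded_linear_ident, of "Df (y + k) - Df y - H *v k"]
      unfolding onorm_id by linarith
  qed
  ultimately have "norm (?g (x + h) - ?g x) \<le> 2 * \<epsilon> * (norm h + norm k) * norm (x + h - x)"
    by (intro differentiable_bound[of ?S]) auto
  also have "\<dots> \<le> 2 * \<epsilon> * (norm h + norm k)\<^sup>2"
    using \<open>0 \<le> \<epsilon>\<close> by (simp add: power2_eq_square mult_left_mono)
  finally show ?thesis
    by (simp add: algebra_simps)
qed

lemma second_difference_quotient_tendsto:
  fixes f :: "real^'n \<Rightarrow> real"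
  assumes "hessian_at f H x"
  shows "((\<lambda>t. (f (x + t *\<^sub>R h + t *\<^sub>R k) - f (x + t *\<^sub>R h) - f (x + t *\<^sub>R k) + f x) / t\<^sup>2)
    \<longlongrightarrow> (H *v k) \<bullet> h) (at 0)"
proof -
  obtain e Df where "e > 0" and grad: "\<forall>y\<in>ball x e. (f has_derivative (\<lambda>v. Df y \<bullet> v)) (at y)"
    and hess: "(Df has_derivative (\<lambda>v. H *v v)) (at x)"
    using assms unfolding hessian_at_def by blast
  define Q where "Q t = f (x + t *\<^sub>R h + t *\<^sub>R k) - f (x + t *\<^sub>R h) - f (x + t *\<^sub>R k) + f x" for t
  define C where "C = (norm h + norm k)\<^sup>2"
  have "((\<lambda>t. Q t / t\<^sup>2) \<longlongrightarrow> (H *v k) \<bullet> h) (at 0)"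
    unfolding LIM_eq
  proof (intro allI impI)
    fix r :: real
    assume "r > 0"
    define \<epsilon> where "\<epsilon> = r / (4 * (C + 1))"
    have "C \<ge> 0" by (simp add: C_def)
    then have "\<epsilon> > 0" and "2 * \<epsilon> * C < r"
      using \<open>r > 0\<close> unfolding \<epsilon>_def by (simp_all add: field_simps add_pos_nonneg)
    then obtain \<delta> where "\<delta> > 0"
      and lin: "\<forall>y. norm (y - x) < \<delta> \<longrightarrow> norm (Df y - Df x - H *v (y - x)) \<le> \<epsilon> * norm (y - x)"
      using hess unfolding has_derivative_at_alt by blast
    define d where "d = min \<delta> e"
    have "d > 0" using \<open>\<delta> > 0\<close> \<open>e > 0\<close> by (simp add: d_def)
    have grad': "(f has_derivative (\<lambda>v. Df y \<bullet> v)) (at y)"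
      and lin': "norm (Df y - Df x - H *v (y - x)) \<le> \<epsilon> * norm (y - x)"
      if "norm (y - x) < d" for y
      using that grad lin by (auto simp: d_def dist_norm norm_minus_commute)
    show "\<exists>s>0. \<forall>t. t \<noteq> 0 \<and> norm (t - 0) < s \<longrightarrow> norm (Q t / t\<^sup>2 - (H *v k) \<bullet> h) < r"
    proof (intro exI[of _ "d / (norm h + norm k + 1)"] conjI allI impI)
      show "0 < d / (norm h + norm k + 1)"
        using \<open>d > 0\<close> by (simp add: add_nonneg_pos)
      fix t :: real
      assume t: "t \<noteq> 0 \<and> norm (t - 0) < d / (norm h + norm k + 1)"
      have "\<bar>t\<bar> * (norm h + norm k) \<le> \<bar>t\<bar> * (norm h + norm k + 1)"
        by (intro mult_left_mono) auto
      also have "\<dots> < d"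
        using t by (simp add: pos_less_divide_eq add_nonneg_pos)
      finally have "norm (t *\<^sub>R h) + norm (t *\<^sub>R k) < d"
        by (simp add: algebra_simps)
      from second_difference_bound[OF grad' lin' less_imp_le[OF \<open>\<epsilon> > 0\<close>] this]
      have "\<bar>Q t - (H *v (t *\<^sub>R k)) \<bullet> (t *\<^sub>R h)\<bar> \<le> 2 * \<epsilon> * (norm (t *\<^sub>R h) + norm (t *\<^sub>R k))\<^sup>2"
        by (simp add: Q_def)
      moreover have "(H *v (t *\<^sub>R k)) \<bullet> (t *\<^sub>R h) = t\<^sup>2 * ((H *v k) \<bullet> h)"
        by (simp add: power2_eq_square matrix_vector_mult_scaleR)
      moreover have "(norm (t *\<^sub>R h) + norm (t *\<^sub>R k))\<^sup>2 = t\<^sup>2 * C"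
        by (simp add: C_def power_mult_distrib flip: distrib_left)
      ultimately have "\<bar>Q t - t\<^sup>2 * ((H *v k) \<bullet> h)\<bar> / t\<^sup>2 \<le> 2 * \<epsilon> * C"
        using t by (simp add: divide_le_eq mult_ac)
      moreover have "Q t / t\<^sup>2 - (H *v k) \<bullet> h = (Q t - t\<^sup>2 * ((H *v k) \<bullet> h)) / t\<^sup>2"
        using t by (simp add: diff_divide_distrib)
      ultimately show "norm (Q t / t\<^sup>2 - (H *v k) \<bullet> h) < r"
        using \<open>2 * \<epsilon> * C < r\<close> by simp
    qed
  qed
  then show ?thesis
    by (simp add: Q_def)
qed

lemma hessian_at_symmetric:
  fixes f :: "real^'n \<Rightarrow> real"
  assumes "hessian_at f H x"
  shows "sym_mat H"
proof -
  have swap: "(H *v k) \<bullet> h = (H *v h) \<bullet> k" for h k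
  proof (rule tendsto_unique[OF trivial_limit_at second_difference_quotient_tendsto[OF assms]])
    have "(\<lambda>t. (f (x + t *\<^sub>R k + t *\<^sub>R h) - f (x + t *\<^sub>R k) - f (x + t *\<^sub>R h) + f x) / t\<^sup>2)
        = (\<lambda>t. (f (x + t *\<^sub>R h + t *\<^sub>R k) - f (x + t *\<^sub>R h) - f (x + t *\<^sub>R k) + f x) / t\<^sup>2)"
      by (simp only: add_ac diff_diff_eq)
    with second_difference_quotient_tendsto[OF assms, of k h]
    show "((\<lambda>t. (f (x + t *\<^sub>R h + t *\<^sub>R k) - f (x + t *\<^sub>R h) - f (x + t *\<^sub>R k) + f x) / t\<^sup>2)
        \<longlongrightarrow> (H *v h) \<bullet> k) (at 0)"
      by simp
  qed
  have "H $ i $ j = H $ j $ i" for i j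
    using swap[of "axis i 1" "axis j 1"] by (simp add: matrix_vector_mult_basis column_def inner_axis)
  then show ?thesis
    unfolding sym_mat_def by (simp add: vec_eq_iff transpose_def)
qed

lemma powr_diff_2_times_square:
  fixes r :: real
  assumes "r > 0"
  shows "r powr (a - 2) * r\<^sup>2 = r powr a"
  using assms by (simp add: powr_diff powr_realpow)

lemma has_derivative_zero_if_powr_bound:
  fixes f :: "real^'n \<Rightarrow> 'b::real_normed_vector"
  assumes "f x0 = 0" and bound: "\<And>y. norm (f y) \<le> C * norm (y - x0) powr p" and "p > 1"
  shows "(f has_derivative (\<lambda>h. 0)) (at x0)"
  unfolding has_derivative_iff_norm
proof (intro conjI bounded_linear_zero)
  have "((\<lambda>y. norm (y - x0)) \<longlongrightarrow> 0) (at x0)"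
    by (intro tendsto_norm_zero LIM_zero tendsto_ident_at)
  then have lim: "((\<lambda>y. C * norm (y - x0) powr (p - 1)) \<longlongrightarrow> 0) (at x0)"
    using \<open>p > 1\<close> by (intro tendsto_mult_right_zero tendsto_zero_powrI) auto
  have ev: "\<forall>\<^sub>F y in at x0. norm (norm (f y - f x0 - 0) / norm (y - x0)) \<le> C * norm (y - x0) powr (p - 1)"
    unfolding eventually_at_filter
  proof (intro always_eventually allI impI)
    fix y
    assume "y \<noteq> x0"
    then have "norm (y - x0) powr p = norm (y - x0) powr (p - 1) * norm (y - x0)"
      by (simp add: powr_diff)
    then show "norm (norm (f y - f x0 - 0) / norm (y - x0)) \<le> C * norm (y - x0) powr (p - 1)"
      using bound[of y] \<open>f x0 = 0\<close> \<open>y \<noteq> x0\<close> by (simp add: divide_le_eq mult.assoc)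
  qed
  show "((\<lambda>y. norm (f y - f x0 - 0) / norm (y - x0)) \<longlongrightarrow> 0) (at x0)"
    by (rule Lim_null_comparison[OF ev lim])
qed

definition norm_powr_grad :: "real^'n \<Rightarrow> real \<Rightarrow> real^'n \<Rightarrow> real^'n" where
  "norm_powr_grad x0 p y = (p * norm (y - x0) powr (p - 2)) *\<^sub>R (y - x0)"

text \<open>At \<open>x = x0\<close> both coefficients vanish because \<open>0 powr _ = 0\<close>; for \<open>p > 2\<close> this is the
  correct Hessian there.\<close>
definition norm_powr_hess :: "real^'n \<Rightarrow> real \<Rightarrow> real^'n \<Rightarrow> real^'n^'n" where
  "norm_powr_hess x0 p x = (p * norm (x - x0) powr (p - 2)) *\<^sub>R mat 1
     + (p * (p - 2) * norm (x - x0) powr (p - 4)) *\<^sub>R (\<chi> i j. (x - x0) $ i * (x - x0) $ j)"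

lemma norm_powr_hess_mult_vector:
  "norm_powr_hess x0 p x *v h = (p * norm (x - x0) powr (p - 2)) *\<^sub>R h
     + (p * (p - 2) * norm (x - x0) powr (p - 4) * ((x - x0) \<bullet> h)) *\<^sub>R (x - x0)"
proof -
  have outer: "(\<chi> i j. v $ i * v $ j) *v h = (v \<bullet> h) *\<^sub>R v" for v h :: "real^'n"
    by (simp add: vec_eq_iff matrix_vector_mult_def inner_vec_def sum_distrib_left mult_ac)
  show ?thesis
    unfolding norm_powr_hess_def matrix_vector_mult_add_rdistrib scaleR_matrix_vector_assoc[symmetric] outer
    by simp
qed

lemma inner_sgn_right: "h \<bullet> sgn v = (v \<bullet> h) / norm v"
  by (simp add: sgn_div_norm inner_commute divide_inverse_commute)

lemma has_derivative_norm_diff: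
  fixes x0 :: "real^'n"
  assumes "y \<noteq> x0"
  shows "((\<lambda>y. norm (y - x0)) has_derivative (\<lambda>h. h \<bullet> sgn (y - x0))) (at y)"
proof -
  have "((\<lambda>y. y - x0) has_derivative (\<lambda>h. h)) (at y)"
    by (auto intro!: derivative_eq_intros)
  from diff_chain_at[OF this has_derivative_norm[of "y - x0"]] assms show ?thesis
    by (simp add: o_def)
qed

lemma has_derivative_norm_powr:
  fixes x0 y :: "real^'n"
  assumes "p > 1"
  shows "((\<lambda>y. norm (y - x0) powr p) has_derivative (\<lambda>h. norm_powr_grad x0 p y \<bullet> h)) (at y)"
proof (cases "y = x0")
  case True
  have "((\<lambda>y. norm (y - x0) powr p) has_derivative (\<lambda>h. 0)) (at x0)"
    by (rule has_derivative_zero_if_powr_bound[where C = 1]) (use assms in auto)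
  with True show ?thesis
    by (simp add: norm_powr_grad_def)
next
  case False
  define r where "r = norm (y - x0)"
  have "r > 0"
    using False by (simp add: r_def)
  have "((\<lambda>y. norm (y - x0) powr p) has_derivative
      (\<lambda>h. r powr p * (0 * ln r + (h \<bullet> sgn (y - x0)) * p / r))) (at y)"
    unfolding r_def
    by (rule has_derivative_powr[OF has_derivative_norm_diff[OF False] has_derivative_const]) (use False in auto)
  moreover have "r powr p * (0 * ln r + (h \<bullet> sgn (y - x0)) * p / r) = norm_powr_grad x0 p y \<bullet> h" for h
  proof -
    have "h \<bullet> sgn (y - x0) = ((y - x0) \<bullet> h) / r"
      by (simp add: r_def inner_sgn_right)
    moreover have "norm_powr_grad x0 p y \<bullet> h = p * r powr (p - 2) * ((y - x0) \<bullet> h)"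
      by (simp only: norm_powr_grad_def inner_scaleR_left r_def)
    ultimately show ?thesis
      unfolding powr_diff_2_times_square[OF \<open>r > 0\<close>, of p, symmetric]
      using \<open>r > 0\<close> by (simp add: field_simps power2_eq_square)
  qed
  ultimately show ?thesis
    by simp
qed

lemma has_derivative_norm_powr_grad:
  fixes x0 x :: "real^'n"
  assumes "p > 2"
  shows "(norm_powr_grad x0 p has_derivative (\<lambda>h. norm_powr_hess x0 p x *v h)) (at x)"
proof (cases "x = x0")
  case True
  have "(norm_powr_grad x0 p has_derivative (\<lambda>h. 0)) (at x0)"
  proof (rule has_derivative_zero_if_powr_bound[where C = p and p = "p - 1"])
    show "norm (norm_powr_grad x0 p y) \<le> p * norm (y - x0) powr (p - 1)" for y
    proof (cases "y = x0")
      case False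
      then have "norm (y - x0) * norm (y - x0) powr (p - 2) = norm (y - x0) powr (p - 1)"
        by (simp add: powr_mult_base)
      then show ?thesis
        using assms by (simp add: norm_powr_grad_def mult_ac)
    qed (simp add: norm_powr_grad_def)
  qed (use assms in \<open>auto simp: norm_powr_grad_def\<close>)
  with True show ?thesis
    by (simp add: norm_powr_hess_def)
next
  case False
  define r where "r = norm (x - x0)"
  have "r > 0"
    using False by (simp add: r_def)
  define c' where "c' h = p * (r powr (p - 2) * (0 * ln r + (h \<bullet> sgn (x - x0)) * (p - 2) / r))" for h
  have "((\<lambda>y. p * norm (y - x0) powr (p - 2)) has_derivative c') (at x)"
    unfolding c'_def r_def
    by (intro has_derivative_mult_right has_derivative_powr has_derivative_norm_diff False has_derivative_const)
      (use False in auto)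
  then have "(norm_powr_grad x0 p has_derivative (\<lambda>h. (p * r powr (p - 2)) *\<^sub>R h + c' h *\<^sub>R (x - x0))) (at x)"
    unfolding norm_powr_grad_def[abs_def] r_def
    by (intro has_derivative_scaleR) (auto intro!: derivative_eq_intros)
  moreover have "c' h = p * (p - 2) * r powr (p - 4) * ((x - x0) \<bullet> h)" for h
  proof -
    have R: "r powr (p - 2) = r powr (p - 4) * r\<^sup>2"
      using powr_diff_2_times_square[OF \<open>r > 0\<close>, of "p - 2"] by simp
    have S: "h \<bullet> sgn (x - x0) = ((x - x0) \<bullet> h) / r"
      by (simp add: r_def inner_sgn_right)
    show ?thesis
      unfolding c'_def R S using \<open>r > 0\<close> by (simp add: power2_eq_square field_simps)
  qed
  ultimately show ?thesis
    by (simp add: norm_powr_hess_mult_vector r_def)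
qed

lemma hessian_at_norm_powr:
  fixes x0 x :: "real^'n"
  assumes "p > 2"
  shows "hessian_at (\<lambda>y. norm (y - x0) powr p) (norm_powr_hess x0 p x) x"
  unfolding hessian_at_def using assms
  by (auto intro!: exI[of _ 1] exI[of _ "norm_powr_grad x0 p"]
      has_derivative_norm_powr has_derivative_norm_powr_grad)

lemma sym_mat_norm_powr_hess: "sym_mat (norm_powr_hess x0 p x)"
  unfolding sym_mat_def norm_powr_hess_def
  by (simp add: vec_eq_iff transpose_def mat_def mult.commute)

lemma psd_mat_norm_powr_hess:
  fixes x0 x :: "real^'n"
  assumes "p \<ge> 2"
  shows "psd_mat (norm_powr_hess x0 p x)"
  unfolding psd_mat_def
proof
  fix v :: "real^'n"
  have "v \<bullet> (norm_powr_hess x0 p x *v v) = p * norm (x - x0) powr (p - 2) * (v \<bullet> v)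
      + p * (p - 2) * norm (x - x0) powr (p - 4) * ((x - x0) \<bullet> v)\<^sup>2"
    by (simp add: norm_powr_hess_mult_vector inner_add_right power2_eq_square inner_commute)
  also have "\<dots> \<ge> 0"
    using assms by (intro add_nonneg_nonneg mult_nonneg_nonneg) auto
  finally show "0 \<le> v \<bullet> (norm_powr_hess x0 p x *v v)" .
qed

lemma mat_norm_norm_powr_hess_le:
  fixes x0 x :: "real^'n"
  assumes "p \<ge> 2"
  shows "mat_norm (norm_powr_hess x0 p x) \<le> p * (p - 1) * norm (x - x0) powr (p - 2)"
  unfolding mat_norm_def
proof (rule onorm_le)
  fix v :: "real^'n"
  define r where "r = norm (x - x0)"
  define c1 where "c1 = p * r powr (p - 2)"
  define c2 where "c2 = p * (p - 2) * r powr (p - 4)"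
  have "c1 \<ge> 0" and "c2 \<ge> 0"
    using assms by (auto simp: c1_def c2_def)
  have "norm (norm_powr_hess x0 p x *v v) \<le> c1 * norm v + c2 * \<bar>(x - x0) \<bullet> v\<bar> * r"
    using norm_triangle_ineq[of "c1 *\<^sub>R v" "(c2 * ((x - x0) \<bullet> v)) *\<^sub>R (x - x0)"]
      \<open>c1 \<ge> 0\<close> \<open>c2 \<ge> 0\<close> assms
    by (simp add: norm_powr_hess_mult_vector c1_def c2_def r_def abs_mult)
  also have "\<dots> \<le> c1 * norm v + c2 * (r * norm v) * r"
    using Cauchy_Schwarz_ineq2[of "x - x0" v] \<open>c2 \<ge> 0\<close>
    by (simp add: r_def mult_left_mono mult_right_mono)
  also have "\<dots> = (c1 + c2 * r\<^sup>2) * norm v"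
    by (simp add: algebra_simps power2_eq_square)
  also have "c2 * r\<^sup>2 = p * (p - 2) * r powr (p - 2)"
  proof (cases "r = 0")
    case False
    then show ?thesis
      using powr_diff_2_times_square[of r "p - 2"] by (simp add: c2_def r_def mult.assoc)
  qed (simp add: c2_def)
  also have "c1 + p * (p - 2) * r powr (p - 2) = p * (p - 1) * norm (x - x0) powr (p - 2)"
    by (simp add: c1_def r_def algebra_simps)
  finally show "norm (norm_powr_hess x0 p x *v v) \<le> p * (p - 1) * norm (x - x0) powr (p - 2) * norm v" .
qed

lemma subdiff_ge_diff_zero:
  assumes "subdiff F A S" and "sym_mat A"
  shows "F A - F 0 \<le> S A"
proof -
  have "sym_mat (- A)"
    using \<open>sym_mat A\<close> unfolding sym_mat_def by (simp add: vec_eq_iff transpose_def)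
  then have "S (- A) \<le> F (A + - A) - F A"
    using \<open>subdiff F A S\<close> unfolding subdiff_def by blast
  moreover have "S (- A) = - S A"
    using \<open>subdiff F A S\<close> unfolding subdiff_def by (simp add: linear_neg)
  ultimately show ?thesis
    by simp
qed

lemma subdiff_le_elliptic_bound:
  assumes "unif_elliptic \<Lambda> F" and "subdiff F A S"
    and "sym_mat A" and "sym_mat P" and "psd_mat P"
  shows "S P \<le> \<Lambda> * mat_norm P"
proof -
  have "S P \<le> F (A + P) - F A"
    using \<open>subdiff F A S\<close> \<open>sym_mat P\<close> unfolding subdiff_def by blast
  also have "\<dots> \<le> \<Lambda> * mat_norm P"
    using assms unfolding unif_elliptic_def by blast
  finally show ?thesis .
qed

lemma Youngs_inequality_scaled:
  fixes \<theta> K U R a :: real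
  assumes "0 < \<theta>" "\<theta> < 1" "0 < K" "0 < U" "0 \<le> R" and a: "K powr (1 / (1 - \<theta>)) \<le> a"
  shows "K * R powr \<theta> \<le> (1 - \<theta>) * a * U powr \<theta> + \<theta> * U powr (\<theta> - 1) * R"
proof (cases "R = 0")
  case True
  have "0 \<le> a"
    using a powr_ge_zero order_trans by blast
  with True assms show ?thesis
    by simp
next
  case False
  \<comment> \<open>weighted AM-GM for \<open>X\<close> and \<open>Y\<close>, whose weighted geometric mean is exactly \<open>K R^\<theta>\<close>\<close>
  define X where "X = U powr (\<theta> - 1) * R"
  define Y where "Y = K powr (1 / (1 - \<theta>)) * U powr \<theta>"
  have "X > 0" and "Y > 0"
    using assms False by (simp_all add: X_def Y_def)
  have "X powr \<theta> = U powr ((\<theta> - 1) * \<theta>) * R powr \<theta>"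
    using assms by (simp add: X_def powr_mult powr_powr)
  moreover have "Y powr (1 - \<theta>) = K * U powr (\<theta> * (1 - \<theta>))"
    using assms by (simp add: Y_def powr_mult powr_powr)
  ultimately have "X powr \<theta> * Y powr (1 - \<theta>) = K * R powr \<theta> * U powr ((\<theta> - 1) * \<theta> + \<theta> * (1 - \<theta>))"
    using \<open>0 < U\<close> by (simp add: powr_add)
  also have "\<dots> = K * R powr \<theta>"
    using \<open>0 < U\<close> by (simp add: algebra_simps)
  finally have "K * R powr \<theta> \<le> \<theta> * X + (1 - \<theta>) * Y"
    using Youngs_inequality_0[of \<theta> "1 - \<theta>" X Y] assms \<open>X > 0\<close> \<open>Y > 0\<close> by simp
  also have "\<dots> \<le> \<theta> * X + (1 - \<theta>) * (a * U powr \<theta>)"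
    using assms unfolding Y_def by (intro add_left_mono mult_left_mono mult_right_mono) auto
  finally show ?thesis
    by (simp add: X_def algebra_simps)
qed

lemma barrier_linearization_nonneg:
  fixes u :: "real^'n \<Rightarrow> real" and x x0 :: "real^'n"
  assumes F: "unif_elliptic \<Lambda> F" "F 0 = 0" "0 < \<Lambda>"
    and \<gamma>: "1 < \<gamma>" "\<gamma> < 2"
    and \<beta>: "\<beta> = 2 / (2 - \<gamma>)"
    and a: "(\<Lambda> * \<beta> * (\<beta> - 1)) powr (1 / (2 - \<gamma>)) \<le> a"
    and u: "hessian_at u Hu x" "F Hu = u x powr (\<gamma> - 1)" "0 < u x"
    and S: "subdiff F Hu S"
    and w: "hessian_at (\<lambda>y. a * u y - norm (y - x0) powr \<beta>) Hw x"
  shows "0 \<le> S Hw - (\<gamma> - 1) * u x powr (\<gamma> - 2) * (a * u x - norm (x - x0) powr \<beta>)"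
proof -
  define K where "K = \<Lambda> * \<beta> * (\<beta> - 1)"
  define U where "U = u x"
  define R where "R = norm (x - x0) powr \<beta>"
  define P where "P = norm_powr_hess x0 \<beta> x"
  have "\<beta> > 2"
    using \<gamma> unfolding \<beta> by (simp add: less_divide_eq)
  have \<beta>_minus_2: "\<beta> - 2 = \<beta> * (\<gamma> - 1)"
    using \<gamma> unfolding \<beta> by (simp add: field_simps)
  have "K > 0"
    using F \<open>\<beta> > 2\<close> by (simp add: K_def)
  have "0 \<le> a"
    using a powr_ge_zero order_trans by blast
  have "sym_mat Hu"
    using hessian_at_symmetric[OF u(1)] .
  have "Hw = a *\<^sub>R Hu - P"
    unfolding P_def
    using hessian_at_unique[OF w hessian_at_scale_diff[OF u(1) hessian_at_norm_powr[OF \<open>\<beta> > 2\<close>]]] .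
  then have "S Hw = a * S Hu - S P"
    using S unfolding subdiff_def by (simp add: linear_diff linear_scale)
  moreover have "U powr (\<gamma> - 1) \<le> S Hu"
    using subdiff_ge_diff_zero[OF S \<open>sym_mat Hu\<close>] u(2) F(2) by (simp add: U_def)
  moreover have "S P \<le> K * R powr (\<gamma> - 1)"
  proof -
    have "S P \<le> \<Lambda> * mat_norm P"
      unfolding P_def using \<open>\<beta> > 2\<close>
      by (intro subdiff_le_elliptic_bound[OF F(1) S \<open>sym_mat Hu\<close>] sym_mat_norm_powr_hess
          psd_mat_norm_powr_hess) simp
    also have "\<dots> \<le> \<Lambda> * (\<beta> * (\<beta> - 1) * norm (x - x0) powr (\<beta> - 2))"
      using mat_norm_norm_powr_hess_le[OF less_imp_le[OF \<open>\<beta> > 2\<close>]] F(3)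
      unfolding P_def by (intro mult_left_mono) auto
    also have "norm (x - x0) powr (\<beta> - 2) = R powr (\<gamma> - 1)"
      unfolding R_def \<beta>_minus_2 by (simp add: powr_powr)
    finally show ?thesis
      by (simp add: K_def mult.assoc)
  qed
  moreover have "K * R powr (\<gamma> - 1) \<le> (2 - \<gamma>) * a * U powr (\<gamma> - 1) + (\<gamma> - 1) * U powr (\<gamma> - 2) * R"
    using Youngs_inequality_scaled[of "\<gamma> - 1" K U R a] \<gamma> \<open>K > 0\<close> u(3) a
    by (simp add: U_def R_def K_def)
  moreover have "U powr (\<gamma> - 2) * U = U powr (\<gamma> - 1)"
    using u(3) powr_mult_base[of U "\<gamma> - 2"] by (simp add: U_def mult.commute)
  ultimately show ?thesis
    using mult_left_mono[OF \<open>U powr (\<gamma> - 1) \<le> S Hu\<close> \<open>0 \<le> a\<close>]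
    by (simp add: U_def R_def algebra_simps)
qed

theorem lemma2p9:
  fixes \<Lambda> \<gamma> :: real
  assumes "1 \<le> \<Lambda>" and "1 < \<gamma>" and "\<gamma> < 2"
  shows "\<exists>a\<^sub>0 > 0. \<forall>(F :: real^'n^'n \<Rightarrow> real) (\<Omega> :: (real^'n) set) u (x\<^sub>0 :: real^'n) a.
    admissible_F \<Lambda> F \<and> open \<Omega> \<and> connected \<Omega> \<and> sol_class F \<gamma> \<Omega> u \<and> a\<^sub>0 \<le> a \<longrightarrow>
    lin_op_nonneg F \<gamma> \<Omega> u (\<lambda>x. a * u x - norm (x - x\<^sub>0) powr (2 / (2 - \<gamma>)))"
proof -
  define \<beta> where "\<beta> = 2 / (2 - \<gamma>)"
  define a\<^sub>0 where "a\<^sub>0 = (\<Lambda> * \<beta> * (\<beta> - 1)) powr (1 / (2 - \<gamma>))"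
  have "\<beta> > 2"
    using assms unfolding \<beta>_def by (simp add: less_divide_eq)
  then have "a\<^sub>0 > 0"
    using assms by (simp add: a\<^sub>0_def)
  \<comment> \<open>the claim is pointwise\<close>
  moreover have "lin_op_nonneg F \<gamma> \<Omega> u (\<lambda>x. a * u x - norm (x - x\<^sub>0) powr \<beta>)"
    if "admissible_F \<Lambda> F" "sol_class F \<gamma> \<Omega> u" "a\<^sub>0 \<le> a" for F \<Omega> u and x\<^sub>0 :: "real^'n" and a
    unfolding lin_op_nonneg_def
  proof (intro ballI impI allI, elim conjE)
    fix x Hu Hw S
    assume "x \<in> \<Omega>" "0 < u x" "hessian_at u Hu x" "subdiff F Hu S"
      "hessian_at (\<lambda>x. a * u x - norm (x - x\<^sub>0) powr \<beta>) Hw x"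
    moreover obtain H where "hessian_at u H x" "F H = u x powr (\<gamma> - 1)"
      using \<open>sol_class F \<gamma> \<Omega> u\<close> \<open>x \<in> \<Omega>\<close> unfolding sol_class_def by blast
    ultimately show "0 \<le> S Hw - (\<gamma> - 1) * u x powr (\<gamma> - 2) * (a * u x - norm (x - x\<^sub>0) powr \<beta>)"
      using that assms hessian_at_unique[of u Hu x H] unfolding admissible_F_def a\<^sub>0_def
      by (intro barrier_linearization_nonneg[where \<Lambda> = \<Lambda> and \<beta> = \<beta>]) (auto simp: \<beta>_def)
  qed
  ultimately show ?thesis
    unfolding \<beta>_def by blast
qed

end
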